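(* Let $\mathcal{C}$ be a hereditary class of graphs. Suppose that every graph $H\in\mathcal{C}$ has a vertex $v$ such that $H[M_H(v)]$ is perfect. Then every $G\in\mathcal{C}$ is perfectly weight divisible, and hence perfectly divisible.
   Context: All graphs are finite and simple. A class of graphs is hereditary if it is closed under taking induced subgraphs. For a vertex $v$ of a graph $H$, $N_H(v)$ is the set of neighbours of $v$ and $M_H(v)=V(H)\setminus(N_H(v)\cup\{v\})$ is the set of non-neighbours of $v$. A graph $G$ is perfect if $\chi(H)=\omega(H)$ for every induced subgraph $H$ of $G$. A graph $G$ is perfectly divisible if for every induced subgraph $H$ of $G$, $V(H)$ can be partitioned into two sets $A,B$ such that $H[A]$ is perfect and $\omega(H[B])<\omega(H)$. A graph $G$ is perfectly weight divisible if for every nonnegative integer weight function $w$ on $V(G)$, there is a partition of $V(G)$ into two sets $S,T$ such that $G[S]$ is perfect and the maximum weight of a clique in $G[T]$ is smaller than the maximum weight of a clique in $G$ (the weight of a clique is the sum of the weights of its vertices). *)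

theory Defs
  imports Main
begin

text \<open>A finite simple graph is given by a finite vertex set V and a symmetric,
irreflexive adjacency relation E (only its restriction to V matters).
The induced subgraph on S \<subseteq> V is (S, E).\<close>

definition graph :: "'a set \<Rightarrow> ('a \<Rightarrow> 'a \<Rightarrow> bool) \<Rightarrow> bool" where
  "graph V E \<longleftrightarrow> finite V \<and> (\<forall>u\<in>V. \<forall>v\<in>V. E u v \<longleftrightarrow> E v u) \<and> (\<forall>v\<in>V. \<not> E v v)"

definition clique :: "'a set \<Rightarrow> ('a \<Rightarrow> 'a \<Rightarrow> bool) \<Rightarrow> 'a set \<Rightarrow> bool" where
  "clique V E K \<longleftrightarrow> K \<subseteq> V \<and> (\<forall>u\<in>K. \<forall>v\<in>K. u \<noteq> v \<longrightarrow> E u v)"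

definition clique_number :: "'a set \<Rightarrow> ('a \<Rightarrow> 'a \<Rightarrow> bool) \<Rightarrow> nat" where
  "clique_number V E = Max (card ` {K. clique V E K})"

definition proper_colouring :: "'a set \<Rightarrow> ('a \<Rightarrow> 'a \<Rightarrow> bool) \<Rightarrow> ('a \<Rightarrow> nat) \<Rightarrow> nat \<Rightarrow> bool" where
  "proper_colouring V E f k \<longleftrightarrow> (\<forall>v\<in>V. f v < k) \<and> (\<forall>u\<in>V. \<forall>v\<in>V. E u v \<longrightarrow> f u \<noteq> f v)"

definition chromatic_number :: "'a set \<Rightarrow> ('a \<Rightarrow> 'a \<Rightarrow> bool) \<Rightarrow> nat" where
  "chromatic_number V E = (LEAST k. \<exists>f. proper_colouring V E f k)"

definition perfect :: "'a set \<Rightarrow> ('a \<Rightarrow> 'a \<Rightarrow> bool) \<Rightarrow> bool" where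
  "perfect V E \<longleftrightarrow> (\<forall>S\<subseteq>V. chromatic_number S E = clique_number S E)"

text \<open>Maximum weight of a clique (the empty clique has weight 0).\<close>
definition max_clique_weight :: "'a set \<Rightarrow> ('a \<Rightarrow> 'a \<Rightarrow> bool) \<Rightarrow> ('a \<Rightarrow> nat) \<Rightarrow> nat" where
  "max_clique_weight V E w = Max ((\<lambda>K. sum w K) ` {K. clique V E K})"

definition non_nbrs :: "'a set \<Rightarrow> ('a \<Rightarrow> 'a \<Rightarrow> bool) \<Rightarrow> 'a \<Rightarrow> 'a set" where
  "non_nbrs V E v = {u \<in> V. u \<noteq> v \<and> \<not> E v u}"

text \<open>Graphs are taken to be nonempty, so the condition ranges over nonempty induced subgraphs.\<close>
definition perfectly_divisible :: "'a set \<Rightarrow> ('a \<Rightarrow> 'a \<Rightarrow> bool) \<Rightarrow> bool" where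
  "perfectly_divisible V E \<longleftrightarrow>
     (\<forall>S\<subseteq>V. S \<noteq> {} \<longrightarrow> (\<exists>A B. A \<union> B = S \<and> A \<inter> B = {} \<and> perfect A E
        \<and> clique_number B E < clique_number S E))"

text \<open>Weight functions that vanish on all of V give maximum clique weight 0, for which
the condition cannot hold; they are excluded.\<close>
definition perfectly_weight_divisible :: "'a set \<Rightarrow> ('a \<Rightarrow> 'a \<Rightarrow> bool) \<Rightarrow> bool" where
  "perfectly_weight_divisible V E \<longleftrightarrow>
     (\<forall>w :: 'a \<Rightarrow> nat. (\<exists>v\<in>V. w v > 0) \<longrightarrow>
        (\<exists>S T. S \<union> T = V \<and> S \<inter> T = {} \<and> perfect S E
           \<and> max_clique_weight T E w < max_clique_weight V E w))"

definition graph_class :: "('a set \<times> ('a \<Rightarrow> 'a \<Rightarrow> bool)) set \<Rightarrow> bool" where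
  "graph_class C \<longleftrightarrow> (\<forall>(V, E)\<in>C. graph V E)"

definition hereditary :: "('a set \<times> ('a \<Rightarrow> 'a \<Rightarrow> bool)) set \<Rightarrow> bool" where
  "hereditary C \<longleftrightarrow> (\<forall>(V, E)\<in>C. \<forall>S\<subseteq>V. (S, E) \<in> C)"

end

theory Submission
  imports Defs
begin

text \<open>A vertex v together with its non-neighbours M(v) induces a graph in which v is isolated,
so it is perfect as soon as M(v) is. Every clique of the remaining vertices lies in N(v), hence
extends by v. Given a weight w, choose v among the vertices of positive weight, using the
hypothesis on the subgraph they induce: removing v and its non-neighbours there leaves only
cliques whose weight grows by w(v) > 0 when v is added, so the maximum clique weight drops.
Unit weights turn weight divisibility into perfect divisibility.\<close>

lemma finite_cliques: "finite V \<Longrightarrow> finite {K. clique V E K}"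
  by (rule finite_subset[of _ "Pow V"]) (auto simp: clique_def)

lemma max_clique_weight_ge:
  assumes "finite V" "clique V E K"
  shows "sum w K \<le> max_clique_weight V E w"
  unfolding max_clique_weight_def
  using assms by (intro Max_ge) (auto intro: finite_imageI finite_cliques)

lemma max_clique_weight_attained:
  assumes "finite V"
  obtains K where "clique V E K" "sum w K = max_clique_weight V E w"
proof -
  have "clique V E {}" by (simp add: clique_def)
  then have "max_clique_weight V E w \<in> sum w ` {K. clique V E K}"
    unfolding max_clique_weight_def
    using assms by (intro Max_in) (auto intro: finite_imageI finite_cliques)
  then show ?thesis using that by (auto simp: image_iff)
qed

lemma max_clique_weight_one:
  assumes "finite V"
  shows "max_clique_weight V E (\<lambda>_. 1) = clique_number V E"
proof -
  have "sum (\<lambda>_. 1) K = card K" if "clique V E K" for K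
    using that by simp
  then show ?thesis
    unfolding max_clique_weight_def clique_number_def
    by (intro arg_cong[where f = Max] image_cong) auto
qed

lemma chromatic_number_singleton:
  assumes "\<not> E v v"
  shows "chromatic_number {v} E = 1"
  unfolding chromatic_number_def
proof (rule Least_equality)
  show "\<exists>f. proper_colouring {v} E f 1"
    using assms by (intro exI[of _ "\<lambda>_. 0"]) (simp add: proper_colouring_def)
qed (auto simp: proper_colouring_def)

lemma clique_number_singleton: "clique_number {v} E = 1"
proof -
  have "{K. clique {v} E K} = {{}, {v}}" unfolding clique_def by auto
  then show ?thesis unfolding clique_number_def by simp
qed

lemma chromatic_number_insert_isolated:
  assumes "S \<noteq> {}" "\<not> E v v" "\<forall>u\<in>S. \<not> E v u \<and> \<not> E u v"
  shows "chromatic_number (insert v S) E = chromatic_number S E"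
proof -
  have "(\<exists>f. proper_colouring (insert v S) E f k) \<longleftrightarrow> (\<exists>f. proper_colouring S E f k)" for k
  proof
    assume "\<exists>f. proper_colouring S E f k"
    then obtain f where f: "proper_colouring S E f k" ..
    from \<open>S \<noteq> {}\<close> f have "0 < k" by (auto simp: proper_colouring_def)
    with f assms have "proper_colouring (insert v S) E (f(v := 0)) k"
      by (auto simp: proper_colouring_def)
    then show "\<exists>f. proper_colouring (insert v S) E f k" by blast
  qed (auto simp: proper_colouring_def)
  then show ?thesis unfolding chromatic_number_def by simp
qed

lemma clique_number_insert_isolated:
  assumes "S \<noteq> {}" "\<forall>u\<in>S. \<not> E v u"
  shows "clique_number (insert v S) E = clique_number S E"
proof -
  have "card K \<in> card ` {K. clique S E K}" if K: "clique (insert v S) E K" for K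
  proof (cases "v \<in> K")
    case True
    have "K = {v}"
    proof (intro equalityI subsetI)
      fix y assume "y \<in> K"
      show "y \<in> {v}"
      proof (rule ccontr)
        assume "y \<notin> {v}"
        with K True \<open>y \<in> K\<close> have "E v y" "y \<in> S" by (auto simp: clique_def)
        with assms(2) show False by blast
      qed
    qed (use True in blast)
    obtain u where "u \<in> S" using assms(1) by blast
    then have "clique S E {u}" by (simp add: clique_def)
    moreover have "card K = card {u}" using \<open>K = {v}\<close> by simp
    ultimately show ?thesis by blast
  next
    case False
    with K have "clique S E K" by (auto simp: clique_def)
    then show ?thesis by blast
  qed
  moreover have "clique S E K \<Longrightarrow> clique (insert v S) E K" for K
    by (auto simp: clique_def)
  ultimately have "card ` {K. clique (insert v S) E K} = card ` {K. clique S E K}"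
    by blast
  then show ?thesis unfolding clique_number_def by simp
qed

lemma perfect_insert_isolated:
  assumes "perfect S E" "\<not> E v v" "\<forall>u\<in>S. \<not> E v u \<and> \<not> E u v"
  shows "perfect (insert v S) E"
  unfolding perfect_def
proof (intro allI impI)
  fix T assume T: "T \<subseteq> insert v S"
  show "chromatic_number T E = clique_number T E"
  proof (cases "v \<in> T")
    case False
    with T have "T \<subseteq> S" by blast
    then show ?thesis using assms(1) by (simp add: perfect_def)
  next
    case True
    define T' where "T' = T - {v}"
    have "T' \<subseteq> S" and T_eq: "T = insert v T'" using T True by (auto simp: T'_def)
    show ?thesis
    proof (cases "T' = {}")
      case True
      then show ?thesis
        using T_eq assms(2) by (simp add: chromatic_number_singleton clique_number_singleton)
    next
      case False
      have "chromatic_number T' E = clique_number T' E"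
        using assms(1) \<open>T' \<subseteq> S\<close> by (simp add: perfect_def)
      then show ?thesis
        using False assms(2,3) \<open>T' \<subseteq> S\<close> T_eq
        by (simp add: chromatic_number_insert_isolated clique_number_insert_isolated subset_iff)
    qed
  qed
qed

lemma graph_subset: "graph V E \<Longrightarrow> S \<subseteq> V \<Longrightarrow> graph S E"
  unfolding graph_def by (auto intro: finite_subset)

lemma perfect_insert_non_nbrs:
  assumes "graph V E" "v \<in> V" "perfect (non_nbrs V E v) E"
  shows "perfect (insert v (non_nbrs V E v)) E"
  using assms by (intro perfect_insert_isolated) (auto simp: graph_def non_nbrs_def)

lemma clique_insert_outside_non_nbrs:
  assumes "graph V E" "v \<in> V" "clique (V - insert v (non_nbrs V E v)) E K"
  shows "clique V E (insert v K)"
proof -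
  have "\<forall>u\<in>K. E v u \<and> E u v"
    using assms unfolding graph_def clique_def non_nbrs_def by blast
  then show ?thesis using assms(2,3) unfolding clique_def by blast
qed

lemma max_clique_weight_outside_non_nbrs_less:
  assumes "graph V E" "H \<subseteq> V" "v \<in> H" "0 < w v" "\<forall>u\<in>V - H. w u = 0"
  shows "max_clique_weight (V - insert v (non_nbrs H E v)) E w < max_clique_weight V E w"
proof -
  let ?T = "V - insert v (non_nbrs H E v)"
  have "finite V" using assms(1) by (simp add: graph_def)
  then have "finite ?T" by blast
  then obtain K where K: "clique ?T E K" "sum w K = max_clique_weight ?T E w"
    by (rule max_clique_weight_attained)
  have "K \<subseteq> ?T" using K(1) by (simp add: clique_def)
  then have "v \<notin> K" by blast
  have "finite K"
    using \<open>K \<subseteq> ?T\<close> \<open>finite V\<close> by (meson Diff_subset finite_subset subset_trans)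
  have "graph H E" using assms(1,2) by (rule graph_subset)
  moreover have "clique (H - insert v (non_nbrs H E v)) E (K \<inter> H)"
    using K(1) by (auto simp: clique_def)
  ultimately have "clique H E (insert v (K \<inter> H))"
    using assms(3) by (blast intro: clique_insert_outside_non_nbrs)
  then have clique_V: "clique V E (insert v (K \<inter> H))"
    using assms(2) by (auto simp: clique_def)
  have "sum w K = sum w (K \<inter> H)"
  proof (rule sum.mono_neutral_right)
    show "\<forall>u\<in>K - K \<inter> H. w u = 0" using \<open>K \<subseteq> ?T\<close> assms(5) by blast
  qed (use \<open>finite K\<close> in auto)
  then have "max_clique_weight ?T E w = sum w (K \<inter> H)" using K(2) by simp
  also have "\<dots> < sum w (insert v (K \<inter> H))"
    using \<open>finite K\<close> \<open>v \<notin> K\<close> assms(4) by simp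
  also have "\<dots> \<le> max_clique_weight V E w"
    using \<open>finite V\<close> clique_V by (rule max_clique_weight_ge)
  finally show ?thesis .
qed

lemma perfectly_weight_divisible_if_perfect_non_nbrs:
  assumes "graph V E"
    and "\<And>H. H \<subseteq> V \<Longrightarrow> H \<noteq> {} \<Longrightarrow> \<exists>v\<in>H. perfect (non_nbrs H E v) E"
  shows "perfectly_weight_divisible V E"
  unfolding perfectly_weight_divisible_def
proof (intro allI impI)
  fix w :: "'a \<Rightarrow> nat" assume "\<exists>v\<in>V. 0 < w v"
  define H where "H = {u \<in> V. 0 < w u}"
  have "H \<subseteq> V" "H \<noteq> {}" using \<open>\<exists>v\<in>V. 0 < w v\<close> by (auto simp: H_def)
  then obtain v where v: "v \<in> H" and perfect_M: "perfect (non_nbrs H E v) E"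
    using assms(2) by blast
  define S where "S = insert v (non_nbrs H E v)"
  have "S \<subseteq> V" using v \<open>H \<subseteq> V\<close> by (auto simp: S_def non_nbrs_def)
  moreover have "perfect S E"
    unfolding S_def using graph_subset[OF assms(1) \<open>H \<subseteq> V\<close>] v perfect_M
    by (rule perfect_insert_non_nbrs)
  moreover have "max_clique_weight (V - S) E w < max_clique_weight V E w"
    unfolding S_def using assms(1) \<open>H \<subseteq> V\<close> v
    by (intro max_clique_weight_outside_non_nbrs_less) (auto simp: H_def)
  ultimately show "\<exists>S T. S \<union> T = V \<and> S \<inter> T = {} \<and> perfect S E
                   \<and> max_clique_weight T E w < max_clique_weight V E w"
    by (intro exI[of _ S] exI[of _ "V - S"]) auto
qed

lemma perfectly_divisible_if_weight_divisible_subsets: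
  assumes "finite V" "\<And>S. S \<subseteq> V \<Longrightarrow> perfectly_weight_divisible S E"
  shows "perfectly_divisible V E"
  unfolding perfectly_divisible_def
proof (intro allI impI)
  fix S assume "S \<subseteq> V" "S \<noteq> {}"
  have "finite S" using \<open>S \<subseteq> V\<close> assms(1) by (rule finite_subset)
  have "perfectly_weight_divisible S E" using \<open>S \<subseteq> V\<close> by (rule assms(2))
  then have "(\<exists>v\<in>S. 0 < (1::nat)) \<longrightarrow> (\<exists>A B. A \<union> B = S \<and> A \<inter> B = {} \<and> perfect A E
      \<and> max_clique_weight B E (\<lambda>_. 1) < max_clique_weight S E (\<lambda>_. 1))"
    unfolding perfectly_weight_divisible_def by (rule spec)
  then obtain A B where "A \<union> B = S" "A \<inter> B = {}" "perfect A E"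
    and weight_less: "max_clique_weight B E (\<lambda>_. 1) < max_clique_weight S E (\<lambda>_. 1)"
    using \<open>S \<noteq> {}\<close> by blast
  have "finite B" using \<open>finite S\<close> \<open>A \<union> B = S\<close> by auto
  have "clique_number B E < clique_number S E"
    using weight_less
    unfolding max_clique_weight_one[OF \<open>finite B\<close>] max_clique_weight_one[OF \<open>finite S\<close>] .
  with \<open>A \<union> B = S\<close> \<open>A \<inter> B = {}\<close> \<open>perfect A E\<close>
  show "\<exists>A B. A \<union> B = S \<and> A \<inter> B = {} \<and> perfect A E
                   \<and> clique_number B E < clique_number S E"
    by blast
qed

theorem theorem2p5:
  fixes C :: "('a set \<times> ('a \<Rightarrow> 'a \<Rightarrow> bool)) set"
  assumes "graph_class C"
    and "hereditary C"
    and "\<And>H E. (H, E) \<in> C \<Longrightarrow> H \<noteq> {} \<Longrightarrow> \<exists>v\<in>H. perfect (non_nbrs H E v) E"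
  shows "\<forall>(V, E)\<in>C. perfectly_weight_divisible V E \<and> perfectly_divisible V E"
proof (clarify, intro conjI)
  fix V E assume "(V, E) \<in> C"
  have in_C: "(S, E) \<in> C" if "S \<subseteq> V" for S
    using assms(2) \<open>(V, E) \<in> C\<close> that unfolding hereditary_def by auto
  have graph: "graph S E" if "S \<subseteq> V" for S
    using assms(1) in_C[OF that] unfolding graph_class_def by auto
  have weight_divisible: "perfectly_weight_divisible S E" if "S \<subseteq> V" for S
    using graph[OF that] assms(3)[OF in_C] that
    by (intro perfectly_weight_divisible_if_perfect_non_nbrs) auto
  then show "perfectly_weight_divisible V E" by blast
  have "finite V" using graph[of V] by (simp add: graph_def)
  then show "perfectly_divisible V E"
    using weight_divisible by (rule perfectly_divisible_if_weight_divisible_subsets)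
qed

end
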